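(* Let $X_t\subset X_{t+p}$ be finite simplicial complexes, let $\mathscr{S}_{t+p}$ be a cellular sheaf on $X_{t+p}$ whose stalks are finite-dimensional inner product spaces over $\mathbb{R}$ or $\mathbb{C}$, and let $\mathscr{S}_t$ be its pullback to $X_t$. Suppose each simplex of $X_{t+p}$ is oriented and the simplices of $X_t$ carry the same orientations. Then the spectrum of the persistent sheaf Laplacian $\Delta_q^{t,p}$ does not depend on the choice of orientations of the simplices of $X_{t+p}$ (with $X_t$ always carrying the inherited orientations).
   Context: A cellular sheaf assigns stalks $\mathscr{S}(\sigma)$ to simplices and linear restriction maps $\mathscr{S}_{\sigma\leqslant\tau}$ to face relations, functorially; the pullback $\mathscr{S}_t$ has the same stalks and restriction maps on $X_t$. $C^q(X;\mathscr{S})=\bigoplus_{\dim\sigma=q}\mathscr{S}(\sigma)$, distinct stalks orthogonal; $C^q(X_t;\mathscr{S}_t)$ is the subspace of $C^q(X_{t+p};\mathscr{S}_{t+p})$ spanned by stalks over simplices of $X_t$. The orientation determines signed incidence numbers: for $\tau=[v_0,\dots,v_n]$ and $\sigma=[v_0,\dots,\hat v_i,\dots,v_n]$, $[\sigma:\tau]=(-1)^i$ (or $(-1)^{i+1}$ if $\sigma$ is oppositely oriented), $0$ if $\sigma$ is not a codimension-one face. Coboundary $d_q|_{\mathscr{S}(\sigma)}=\sum_{\sigma\leqslant\tau}[\sigma:\tau]\mathscr{S}_{\sigma\leqslant\tau}$; $d^t,d^{t+p}$ denote those of the two complexes. Let $\mathbb{C}^{t,p}_{q+1}=\{e\in C^{q+1}(X_{t+p};\mathscr{S}_{t+p})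 : (d_q^{t+p})^*(e)\in C^q(X_t;\mathscr{S}_t)\}$, let $\eth_q^{t,p}:C^q(X_t;\mathscr{S}_t)\to\mathbb{C}^{t,p}_{q+1}$ be the adjoint of $(d_q^{t+p})^*|_{\mathbb{C}^{t,p}_{q+1}}$, and define $\Delta_q^{t,p}=(\eth_q^{t,p})^*\eth_q^{t,p}+d_{q-1}^t(d_{q-1}^t)^*$. *)

theory Defs
  imports "Jordan_Normal_Form.Schur_Decomposition"
begin

definition simplicial_complex :: "'v set set \<Rightarrow> bool" where
  "simplicial_complex X \<longleftrightarrow> finite X \<and>
     (\<forall>\<sigma>\<in>X. finite \<sigma> \<and> \<sigma> \<noteq> {}) \<and>
     (\<forall>\<sigma>\<in>X. \<forall>\<rho>. \<rho> \<subseteq> \<sigma> \<longrightarrow> \<rho> \<noteq> {} \<longrightarrow> \<rho> \<in> X)"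

definition cells :: "'v set set \<Rightarrow> nat \<Rightarrow> 'v set set" where
  "cells X q = {\<sigma> \<in> X. card \<sigma> = Suc q}"

text \<open>An orientation of the simplices of X assigns to each simplex an ordering
  [v0,...,vn] of its vertices (an orientation is the class of such orderings
  modulo even permutations; quantifying over all orderings covers all orientations).\<close>
definition orientation :: "'v set set \<Rightarrow> ('v set \<Rightarrow> 'v list) \<Rightarrow> bool" where
  "orientation X ori \<longleftrightarrow> (\<forall>\<sigma>\<in>X. distinct (ori \<sigma>) \<and> set (ori \<sigma>) = \<sigma>)"

definition perm_sign :: "'v list \<Rightarrow> 'v list \<Rightarrow> int" where
  "perm_sign xs ys = (-1) ^ card {(a, b). \<exists>i j. i < j \<and> j < length xs \<and> xs ! i = a \<and> xs ! j = b \<and>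
        (\<exists>k l. k < l \<and> l < length ys \<and> ys ! k = b \<and> ys ! l = a)}"

text \<open>Signed incidence number [sigma : tau]: if tau = [v0,...,vn] (its orientation) and
  sigma = tau minus v_i, it is (-1)^i if sigma is oriented as [v0,...,^vi,...,vn] and
  (-1)^(i+1) if oppositely oriented; 0 if sigma is not a codimension-one face of tau.\<close>
definition incidence :: "('v set \<Rightarrow> 'v list) \<Rightarrow> 'v set \<Rightarrow> 'v set \<Rightarrow> int" where
  "incidence ori \<sigma> \<tau> =
     (if \<sigma> \<subseteq> \<tau> \<and> card \<tau> = Suc (card \<sigma>) then
        (let v = the_elem (\<tau> - \<sigma>); i = length (takeWhile (\<lambda>x. x \<noteq> v) (ori \<tau>))
         in (-1) ^ i * perm_sign (ori \<sigma>) (remove1 v (ori \<tau>)))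
      else 0)"

text \<open>A cellular sheaf with finite-dimensional inner product stalks: the stalk over sigma
  is the coordinate space of dimension sdim sigma with its standard inner product
  (every finite-dimensional inner product space is isometric to such a space),
  and the restriction map for sigma <= tau is the matrix res sigma tau.\<close>
definition cellular_sheaf ::
  "'v set set \<Rightarrow> ('v set \<Rightarrow> nat) \<Rightarrow> ('v set \<Rightarrow> 'v set \<Rightarrow> 'a :: comm_ring_1 mat) \<Rightarrow> bool" where
  "cellular_sheaf X sdim res \<longleftrightarrow>
     (\<forall>\<sigma>\<in>X. \<forall>\<tau>\<in>X. \<sigma> \<subseteq> \<tau> \<longrightarrow> res \<sigma> \<tau> \<in> carrier_mat (sdim \<tau>) (sdim \<sigma>)) \<and>
     (\<forall>\<sigma>\<in>X. res \<sigma> \<sigma> = 1\<^sub>m (sdim \<sigma>)) \<and>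
     (\<forall>\<rho>\<in>X. \<forall>\<sigma>\<in>X. \<forall>\<tau>\<in>X. \<rho> \<subseteq> \<sigma> \<longrightarrow> \<sigma> \<subseteq> \<tau> \<longrightarrow> res \<rho> \<tau> = res \<sigma> \<tau> * res \<rho> \<sigma>)"

definition cell_list :: "'v set set \<Rightarrow> nat \<Rightarrow> 'v set list" where
  "cell_list X q = (SOME xs. distinct xs \<and> set xs = cells X q)"

text \<open>Coordinates of C^q(X; S) = direct sum of stalks over q-simplices, with distinct
  stalks orthogonal: a coordinate is a pair (sigma, i) with i < sdim sigma.\<close>
definition coords :: "('v set \<Rightarrow> nat) \<Rightarrow> 'v set set \<Rightarrow> nat \<Rightarrow> ('v set \<times> nat) list" where
  "coords sdim X q = concat (map (\<lambda>\<sigma>. map (Pair \<sigma>) [0..<sdim \<sigma>]) (cell_list X q))"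

definition cdim :: "('v set \<Rightarrow> nat) \<Rightarrow> 'v set set \<Rightarrow> nat \<Rightarrow> nat" where
  "cdim sdim X q = length (coords sdim X q)"

definition coboundary ::
  "('v set \<Rightarrow> 'v list) \<Rightarrow> ('v set \<Rightarrow> nat) \<Rightarrow> ('v set \<Rightarrow> 'v set \<Rightarrow> 'a :: comm_ring_1 mat) \<Rightarrow>
   'v set set \<Rightarrow> nat \<Rightarrow> 'a mat" where
  "coboundary ori sdim res X q =
     mat (cdim sdim X (Suc q)) (cdim sdim X q)
       (\<lambda>(r, c). (case coords sdim X (Suc q) ! r of (\<tau>, i) \<Rightarrow>
                   case coords sdim X q ! c of (\<sigma>, j) \<Rightarrow>
                     if \<sigma> \<subseteq> \<tau> then of_int (incidence ori \<sigma> \<tau>) * res \<sigma> \<tau> $$ (i, j) else 0))"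

text \<open>Inclusion of C^q(X_t; S_t) into C^q(X_{t+p}; S_{t+p}) as the subspace spanned by the
  stalks over simplices of X_t (in coordinates).\<close>
definition inclusion ::
  "('v set \<Rightarrow> nat) \<Rightarrow> 'v set set \<Rightarrow> 'v set set \<Rightarrow> nat \<Rightarrow> 'a :: comm_ring_1 mat" where
  "inclusion sdim K L q =
     mat (cdim sdim L q) (cdim sdim K q)
       (\<lambda>(r, c). if coords sdim L q ! r = coords sdim K q ! c then 1 else 0)"

text \<open>The set C^{t,p}_{q+1} of (q+1)-cochains e on X_{t+p} with (d_q^{t+p})^* e in C^q(X_t).\<close>
definition pers_space ::
  "('v set \<Rightarrow> 'v list) \<Rightarrow> ('v set \<Rightarrow> nat) \<Rightarrow> ('v set \<Rightarrow> 'v set \<Rightarrow> 'a :: conjugatable_field mat) \<Rightarrow>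
   'v set set \<Rightarrow> 'v set set \<Rightarrow> nat \<Rightarrow> 'a vec set" where
  "pers_space ori sdim res K L q =
     {e \<in> carrier_vec (cdim sdim L (Suc q)).
        \<exists>x \<in> carrier_vec (cdim sdim K q).
          mat_adjoint (coboundary ori sdim res L q) *\<^sub>v e = inclusion sdim K L q *\<^sub>v x}"

text \<open>(d_q^{t+p})^* restricted to C^{t,p}_{q+1}, as a map into C^q(X_t) (K-coordinates).\<close>
definition pers_down ::
  "('v set \<Rightarrow> 'v list) \<Rightarrow> ('v set \<Rightarrow> nat) \<Rightarrow> ('v set \<Rightarrow> 'v set \<Rightarrow> 'a :: conjugatable_field mat) \<Rightarrow>
   'v set set \<Rightarrow> 'v set set \<Rightarrow> nat \<Rightarrow> 'a vec \<Rightarrow> 'a vec" where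
  "pers_down ori sdim res K L q e =
     (THE x. x \<in> carrier_vec (cdim sdim K q) \<and>
        mat_adjoint (coboundary ori sdim res L q) *\<^sub>v e = inclusion sdim K L q *\<^sub>v x)"

text \<open>eth_q^{t,p} : C^q(X_t) \<rightarrow> C^{t,p}_{q+1}, the adjoint of pers_down.\<close>
definition eth ::
  "('v set \<Rightarrow> 'v list) \<Rightarrow> ('v set \<Rightarrow> nat) \<Rightarrow> ('v set \<Rightarrow> 'v set \<Rightarrow> 'a :: conjugatable_field mat) \<Rightarrow>
   'v set set \<Rightarrow> 'v set set \<Rightarrow> nat \<Rightarrow> 'a vec \<Rightarrow> 'a vec" where
  "eth ori sdim res K L q x =
     (THE y. y \<in> pers_space ori sdim res K L q \<and>
        (\<forall>e \<in> pers_space ori sdim res K L q. y \<bullet>c e = x \<bullet>c pers_down ori sdim res K L q e))"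

definition eth_adj ::
  "('v set \<Rightarrow> 'v list) \<Rightarrow> ('v set \<Rightarrow> nat) \<Rightarrow> ('v set \<Rightarrow> 'v set \<Rightarrow> 'a :: conjugatable_field mat) \<Rightarrow>
   'v set set \<Rightarrow> 'v set set \<Rightarrow> nat \<Rightarrow> 'a vec \<Rightarrow> 'a vec" where
  "eth_adj ori sdim res K L q e =
     (THE z. z \<in> carrier_vec (cdim sdim K q) \<and>
        (\<forall>x \<in> carrier_vec (cdim sdim K q). z \<bullet>c x = e \<bullet>c eth ori sdim res K L q x))"

text \<open>Down part d_{q-1}^t (d_{q-1}^t)^*, which is 0 for q = 0 (C^{-1} = 0).\<close>
definition down_laplacian ::
  "('v set \<Rightarrow> 'v list) \<Rightarrow> ('v set \<Rightarrow> nat) \<Rightarrow> ('v set \<Rightarrow> 'v set \<Rightarrow> 'a :: conjugatable_field mat) \<Rightarrow>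
   'v set set \<Rightarrow> nat \<Rightarrow> 'a mat" where
  "down_laplacian ori sdim res K q =
     (if q = 0 then 0\<^sub>m (cdim sdim K 0) (cdim sdim K 0)
      else coboundary ori sdim res K (q - 1) * mat_adjoint (coboundary ori sdim res K (q - 1)))"

definition pers_laplacian ::
  "('v set \<Rightarrow> 'v list) \<Rightarrow> ('v set \<Rightarrow> nat) \<Rightarrow> ('v set \<Rightarrow> 'v set \<Rightarrow> 'a :: conjugatable_field mat) \<Rightarrow>
   'v set set \<Rightarrow> 'v set set \<Rightarrow> nat \<Rightarrow> 'a mat" where
  "pers_laplacian ori sdim res K L q =
     mat (cdim sdim K q) (cdim sdim K q)
       (\<lambda>(i, j). (eth_adj ori sdim res K L q (eth ori sdim res K L q (unit_vec (cdim sdim K q) j))) $ i)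
     + down_laplacian ori sdim res K q"

text \<open>Spectrum of a square matrix, with (algebraic) multiplicities: the multiset of roots
  of its characteristic polynomial.\<close>
definition spectrum_mset :: "'a :: field mat \<Rightarrow> 'a multiset" where
  "spectrum_mset A = proots (char_poly A)"

end

theory Submission
  imports Defs
begin

(* Reorienting a simplex sigma multiplies every incidence number [sigma:tau] and [rho:sigma] by
   the sign eps(sigma) of the permutation relating its two orderings.  Hence each coboundary is
   conjugated by diagonal sign matrices, d' = R_{q+1} d R_q, and the sign matrix of C^q(X_{t+p})
   restricts to that of C^q(X_t).  Sign matrices are self-adjoint involutions, so they transport
   the space C^{t,p}_{q+1} and the orthogonal projection P onto it.  Since eth = P d iota and
   eth^* = iota^* d^*, this gives Delta' = R Delta R with R R = 1: the two persistent Laplacians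
   are similar and have the same characteristic polynomial. *)

section \<open>Relative order of two enumerations of a finite set\<close>

fun precedes :: "'v list \<Rightarrow> 'v \<Rightarrow> 'v \<Rightarrow> bool" where
  "precedes [] a b \<longleftrightarrow> False"
| "precedes (x # xs) a b \<longleftrightarrow> (a = x \<and> b \<in> set xs) \<or> precedes xs a b"

lemma precedes_iff_nth:
  "precedes xs a b \<longleftrightarrow> (\<exists>i j. i < j \<and> j < length xs \<and> xs ! i = a \<and> xs ! j = b)"
proof (induction xs)
  case (Cons x xs)
  have "(\<exists>i j. i < j \<and> j < length (x # xs) \<and> (x # xs) ! i = a \<and> (x # xs) ! j = b) \<longleftrightarrow>
      (a = x \<and> b \<in> set xs) \<or> (\<exists>i j. i < j \<and> j < length xs \<and> xs ! i = a \<and> xs ! j = b)"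
    (is "?l \<longleftrightarrow> ?r")
  proof
    assume ?l
    then obtain i j where ij: "i < j" "j < Suc (length xs)" "(x # xs) ! i = a" "(x # xs) ! j = b"
      by auto
    then obtain j' where j: "j = Suc j'" by (cases j) auto
    show ?r using ij unfolding j by (cases i) auto
  next
    assume ?r
    then show ?l
    proof
      assume "a = x \<and> b \<in> set xs"
      then obtain j where "j < length xs" "xs ! j = b" "a = x" by (auto simp: in_set_conv_nth)
      then show ?l by (intro exI[of _ 0] exI[of _ "Suc j"]) auto
    next
      assume "\<exists>i j. i < j \<and> j < length xs \<and> xs ! i = a \<and> xs ! j = b"
      then obtain i j where "i < j" "j < length xs" "xs ! i = a" "xs ! j = b" by blast
      then show ?l by (intro exI[of _ "Suc i"] exI[of _ "Suc j"]) auto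
    qed
  qed
  then show ?case using Cons.IH by simp
qed simp

lemma precedes_append:
  "precedes (xs @ ys) a b \<longleftrightarrow> precedes xs a b \<or> precedes ys a b \<or> (a \<in> set xs \<and> b \<in> set ys)"
  by (induction xs) auto

lemma precedes_set: "precedes xs a b \<Longrightarrow> a \<in> set xs \<and> b \<in> set xs"
  by (induction xs) auto

lemma precedes_total:
  "distinct xs \<Longrightarrow> a \<in> set xs \<Longrightarrow> b \<in> set xs \<Longrightarrow> a \<noteq> b \<Longrightarrow> precedes xs a b \<or> precedes xs b a"
  by (induction xs) auto

lemma precedes_asym: "distinct xs \<Longrightarrow> precedes xs a b \<Longrightarrow> \<not> precedes xs b a"
  by (induction xs) (auto dest: precedes_set)

lemma precedes_flip:
  assumes "distinct xs" "distinct ys" "set xs = set ys" "precedes xs a b"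
  shows "precedes ys b a \<longleftrightarrow> \<not> precedes ys a b"
proof -
  have "a \<noteq> b" "a \<in> set ys" "b \<in> set ys"
    using assms precedes_asym[of xs a b] precedes_set[of xs a b] by auto
  then show ?thesis using assms(2) precedes_total[of ys a b] precedes_asym[of ys a b] by blast
qed

lemma perm_sign_precedes:
  "perm_sign xs ys = (-1) ^ card {(a, b). precedes xs a b \<and> precedes ys b a}"
  unfolding perm_sign_def precedes_iff_nth by (rule arg_cong[where f = "\<lambda>A. (-1) ^ card A"]) auto

lemma perm_sign_mult_self: "perm_sign xs ys * perm_sign xs ys = 1"
  unfolding perm_sign_def by (simp add: power_mult_distrib[symmetric])

lemma perm_sign_sym: "perm_sign xs ys = perm_sign ys xs"
proof -
  have "{(a, b). precedes xs a b \<and> precedes ys b a} = prod.swap ` {(a, b). precedes ys a b \<and> precedes xs b a}"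
    by auto
  then show ?thesis unfolding perm_sign_precedes by (simp add: card_image)
qed

lemma perm_sign_Cons_Cons:
  "v \<notin> set xs \<Longrightarrow> v \<notin> set ys \<Longrightarrow> perm_sign (v # xs) (v # ys) = perm_sign xs ys"
  unfolding perm_sign_precedes
  by (intro arg_cong[where f = "\<lambda>A. (-1) ^ card A"]) (auto dest: precedes_set)

lemma perm_sign_move_to_front:
  assumes "distinct (l1 @ v # l2)"
  shows "perm_sign (v # l1 @ l2) (l1 @ v # l2) = (-1) ^ length l1"
proof -
  have "{(a, b). precedes (v # l1 @ l2) a b \<and> precedes (l1 @ v # l2) b a} = Pair v ` set l1"
    using assms by (auto simp: precedes_append dest: precedes_set precedes_asym)
  moreover have "card (Pair v ` set l1) = length l1"
    using assms by (simp add: card_image inj_on_def distinct_card)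
  ultimately show ?thesis unfolding perm_sign_precedes by simp
qed

definition ordered_pairs :: "'v list \<Rightarrow> ('v \<times> 'v) set" where
  "ordered_pairs xs = {(a, b). precedes xs a b}"

definition order_sign :: "'v list \<Rightarrow> 'v \<times> 'v \<Rightarrow> int" where
  "order_sign ys p = (if precedes ys (fst p) (snd p) then 1 else -1)"

lemma finite_ordered_pairs: "finite (ordered_pairs xs)"
proof (rule finite_subset)
  show "ordered_pairs xs \<subseteq> set xs \<times> set xs" unfolding ordered_pairs_def by (auto dest: precedes_set)
qed simp

lemma order_sign_swap:
  assumes "distinct ys" "a \<in> set ys" "b \<in> set ys" "a \<noteq> b"
  shows "order_sign ys (b, a) = - order_sign ys (a, b)"
proof -
  have "precedes ys b a \<longleftrightarrow> \<not> precedes ys a b"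
    using assms precedes_total[of ys a b] precedes_asym[of ys a b] by blast
  then show ?thesis by (simp add: order_sign_def)
qed

lemma order_sign_outside: "a \<notin> set ys \<or> b \<notin> set ys \<Longrightarrow> order_sign ys (a, b) = -1"
  by (auto simp: order_sign_def dest: precedes_set)

context
  fixes xs ys :: "'v list"
  assumes xs: "distinct xs" and ys: "distinct ys" and same_set: "set xs = set ys"
begin

lemma perm_sign_eq_prod_order_sign: "perm_sign xs ys = (\<Prod>p\<in>ordered_pairs xs. order_sign ys p)"
proof -
  have "ordered_pairs xs - {p. precedes ys (fst p) (snd p)} = {(a, b). precedes xs a b \<and> precedes ys b a}"
    unfolding ordered_pairs_def by (auto simp: precedes_flip[OF xs ys same_set])
  then show ?thesis
    unfolding order_sign_def prod.If_cases[OF finite_ordered_pairs] perm_sign_precedes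
    by (simp add: Diff_eq)
qed

lemma prod_ordered_pairs_swap_invariant:
  assumes h: "\<And>a b. h (a, b) = h (b, a)"
  shows "(\<Prod>p\<in>ordered_pairs xs. h p) = (\<Prod>p\<in>ordered_pairs ys. h p)"
proof -
  let ?X = "ordered_pairs xs" and ?Y = "ordered_pairs ys"
  have "?X - ?Y = {(a, b). precedes xs a b \<and> precedes ys b a}"
    unfolding ordered_pairs_def by (auto simp: precedes_flip[OF xs ys same_set])
  also have "\<dots> = prod.swap ` {(a, b). precedes ys a b \<and> precedes xs b a}" by auto
  also have "{(a, b). precedes ys a b \<and> precedes xs b a} = ?Y - ?X"
    unfolding ordered_pairs_def by (auto simp: precedes_flip[OF ys xs same_set[symmetric]])
  finally have swap: "?X - ?Y = prod.swap ` (?Y - ?X)" .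
  have "h (prod.swap p) = h p" for p by (cases p) (simp add: h)
  then have "(\<Prod>p\<in>?X - ?Y. h p) = (\<Prod>p\<in>?Y - ?X. h p)"
    unfolding swap by (simp add: prod.reindex)
  then show ?thesis
    using prod.Int_Diff[OF finite_ordered_pairs, of h xs ?Y]
      prod.Int_Diff[OF finite_ordered_pairs, of h ys ?X]
    by (simp add: Int_commute)
qed

end

lemma perm_sign_trans:
  assumes "distinct xs" "distinct ys" "distinct zs" "set xs = set ys" "set ys = set zs"
  shows "perm_sign xs zs = perm_sign xs ys * perm_sign ys zs"
proof -
  let ?h = "\<lambda>p. order_sign ys p * order_sign zs p"
  have sq: "order_sign ys p * order_sign ys p = 1" for p by (simp add: order_sign_def)
  have h: "?h (a, b) = ?h (b, a)" for a b
  proof (cases "a \<in> set ys \<and> b \<in> set ys \<and> a \<noteq> b")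
    case True
    then show ?thesis using assms by (simp add: order_sign_swap)
  next
    case False
    then show ?thesis using assms(5) by (auto simp: order_sign_outside)
  qed
  have "perm_sign xs zs = (\<Prod>p\<in>ordered_pairs xs. order_sign ys p * ?h p)"
    using assms by (simp add: perm_sign_eq_prod_order_sign mult.assoc[symmetric] sq)
  also have "\<dots> = perm_sign xs ys * (\<Prod>p\<in>ordered_pairs xs. ?h p)"
    using assms by (simp add: prod.distrib perm_sign_eq_prod_order_sign)
  also have "(\<Prod>p\<in>ordered_pairs xs. ?h p) = (\<Prod>p\<in>ordered_pairs ys. ?h p)"
    by (rule prod_ordered_pairs_swap_invariant[of xs ys ?h, OF assms(1,2,4) h])
  also have "\<dots> = (\<Prod>p\<in>ordered_pairs ys. order_sign zs p)"
    by (rule prod.cong) (auto simp: ordered_pairs_def order_sign_def)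
  also have "\<dots> = perm_sign ys zs"
    using assms by (simp add: perm_sign_eq_prod_order_sign)
  finally show ?thesis .
qed

section \<open>Incidence numbers under reorientation\<close>

lemma incidence_eq_perm_sign:
  assumes ori: "orientation X ori" and "\<sigma> \<in> X" "\<tau> \<in> X" "\<sigma> \<subseteq> \<tau>" "card \<tau> = Suc (card \<sigma>)"
  obtains v where "v \<notin> \<sigma>" "\<tau> = insert v \<sigma>" "incidence ori \<sigma> \<tau> = perm_sign (v # ori \<sigma>) (ori \<tau>)"
proof -
  have "finite \<tau>" using assms(5) card.infinite by fastforce
  then have "card (\<tau> - \<sigma>) = 1" using assms(4,5) finite_subset[OF assms(4)] by (simp add: card_Diff_subset)
  then obtain v where v: "\<tau> - \<sigma> = {v}" by (rule card_1_singletonE)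
  have \<tau>: "distinct (ori \<tau>)" "set (ori \<tau>) = \<tau>" and \<sigma>: "distinct (ori \<sigma>)" "set (ori \<sigma>) = \<sigma>"
    using ori assms(2,3) unfolding orientation_def by auto
  obtain l1 l2 where split: "ori \<tau> = l1 @ v # l2" "v \<notin> set l1"
    using split_list_first[of v "ori \<tau>"] v \<tau> by auto
  have takeWhile: "takeWhile (\<lambda>x. x \<noteq> v) (ori \<tau>) = l1"
    unfolding split(1) using split(2) by (subst takeWhile_append2) auto
  have remove1: "remove1 v (ori \<tau>) = l1 @ l2"
    unfolding split(1) using split(2) by (simp add: remove1_append)
  have \<sigma>_l: "\<sigma> = set l1 \<union> set l2" and dist: "distinct (l1 @ v # l2)"
    using v \<tau> split assms(4) by auto
  have "incidence ori \<sigma> \<tau> = (-1) ^ length l1 * perm_sign (ori \<sigma>) (l1 @ l2)"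
    unfolding incidence_def using assms(4,5) v takeWhile remove1 by (simp add: Let_def)
  also have "\<dots> = perm_sign (v # ori \<sigma>) (v # l1 @ l2) * perm_sign (v # l1 @ l2) (l1 @ v # l2)"
    using \<sigma> \<sigma>_l dist by (simp add: perm_sign_Cons_Cons perm_sign_move_to_front)
  also have "\<dots> = perm_sign (v # ori \<sigma>) (ori \<tau>)"
    unfolding split(1) using \<sigma> \<sigma>_l dist by (intro perm_sign_trans[symmetric]) auto
  finally show ?thesis using that v assms(4) by blast
qed

lemma incidence_reorient:
  assumes or1: "orientation X or1" and or2: "orientation X or2" and X: "\<sigma> \<in> X" "\<tau> \<in> X"
  shows "incidence or2 \<sigma> \<tau> =
    perm_sign (or1 \<sigma>) (or2 \<sigma>) * perm_sign (or1 \<tau>) (or2 \<tau>) * incidence or1 \<sigma> \<tau>"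
proof (cases "\<sigma> \<subseteq> \<tau> \<and> card \<tau> = Suc (card \<sigma>)")
  case True
  obtain v where v: "v \<notin> \<sigma>" "\<tau> = insert v \<sigma>"
    and inc1: "incidence or1 \<sigma> \<tau> = perm_sign (v # or1 \<sigma>) (or1 \<tau>)"
    using incidence_eq_perm_sign[OF or1 X] True by blast
  moreover obtain w where "\<tau> = insert w \<sigma>" "w \<notin> \<sigma>"
    and inc2: "incidence or2 \<sigma> \<tau> = perm_sign (w # or2 \<sigma>) (or2 \<tau>)"
    using incidence_eq_perm_sign[OF or2 X] True by blast
  ultimately have inc2: "incidence or2 \<sigma> \<tau> = perm_sign (v # or2 \<sigma>) (or2 \<tau>)" by auto
  have d: "distinct (or1 \<sigma>)" "set (or1 \<sigma>) = \<sigma>" "distinct (or2 \<sigma>)" "set (or2 \<sigma>) = \<sigma>"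
    "distinct (or1 \<tau>)" "set (or1 \<tau>) = \<tau>" "distinct (or2 \<tau>)" "set (or2 \<tau>) = \<tau>"
    using or1 or2 X unfolding orientation_def by auto
  have "perm_sign (v # or2 \<sigma>) (or2 \<tau>) = perm_sign (v # or2 \<sigma>) (v # or1 \<sigma>) * perm_sign (v # or1 \<sigma>) (or2 \<tau>)"
    by (rule perm_sign_trans) (use d v in auto)
  also have "perm_sign (v # or1 \<sigma>) (or2 \<tau>) = perm_sign (v # or1 \<sigma>) (or1 \<tau>) * perm_sign (or1 \<tau>) (or2 \<tau>)"
    by (rule perm_sign_trans) (use d v in auto)
  also have "perm_sign (v # or2 \<sigma>) (v # or1 \<sigma>) = perm_sign (or1 \<sigma>) (or2 \<sigma>)"
    using d v by (simp add: perm_sign_Cons_Cons perm_sign_sym)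
  finally show ?thesis using inc1 inc2 by (simp add: ac_simps)
next
  case False
  then have "incidence ori \<sigma> \<tau> = 0" for ori
    unfolding incidence_def using False by (simp only: if_not_P)
  then show ?thesis by simp
qed

section \<open>Conjugate inner product, adjoints and Hermitian involutions\<close>

lemma conjugate_one [simp]: "conjugate (1 :: 'a :: {conjugatable_ring, ring_1}) = 1"
proof -
  have "conjugate (1 :: 'a) = conjugate (1 * conjugate 1)"
    by (simp only: conjugate_dist_mul conjugate_id mult_1_right)
  then show ?thesis by simp
qed

lemma conjugate_of_int [simp]: "conjugate (of_int k :: 'a :: {conjugatable_ring, ring_1}) = of_int k"
proof (induction k rule: int_induct[where k = 0])
  case (step2 i)
  have "conjugate (of_int (i - 1) :: 'a) = conjugate (of_int i + - 1)" by simp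
  also have "\<dots> = of_int i + - 1"
    using step2 by (simp only: conjugate_dist_add conjugate_neg conjugate_one)
  finally show ?case by simp
qed (simp_all add: conjugate_dist_add)

lemma cscalar_prod_add_left:
  "a \<in> carrier_vec n \<Longrightarrow> b \<in> carrier_vec n \<Longrightarrow> c \<in> carrier_vec n \<Longrightarrow>
    (a + b) \<bullet>c c = a \<bullet>c c + (b :: 'a :: conjugatable_field vec) \<bullet>c c"
  by (simp add: add_scalar_prod_distrib[of _ n])

lemma cscalar_prod_diff_left:
  "a \<in> carrier_vec n \<Longrightarrow> b \<in> carrier_vec n \<Longrightarrow> c \<in> carrier_vec n \<Longrightarrow>
    (a - b) \<bullet>c c = a \<bullet>c c - (b :: 'a :: conjugatable_field vec) \<bullet>c c"
  by (simp add: minus_scalar_prod_distrib[of _ n])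

lemma cscalar_prod_add_right:
  "a \<in> carrier_vec n \<Longrightarrow> b \<in> carrier_vec n \<Longrightarrow> c \<in> carrier_vec n \<Longrightarrow>
    a \<bullet>c (b + c) = a \<bullet>c b + (a :: 'a :: conjugatable_field vec) \<bullet>c c"
  by (simp add: conjugate_add_vec[of _ n] scalar_prod_add_distrib[of _ n])

lemma cscalar_prod_smult_right:
  "a \<in> carrier_vec n \<Longrightarrow> b \<in> carrier_vec n \<Longrightarrow>
    a \<bullet>c (k \<cdot>\<^sub>v b) = conjugate k * ((a :: 'a :: conjugatable_field vec) \<bullet>c b)"
  by (simp add: conjugate_smult_vec)

lemma cscalar_prod_swap:
  "a \<in> carrier_vec n \<Longrightarrow> b \<in> carrier_vec n \<Longrightarrow>
    b \<bullet>c a = conjugate ((a :: 'a :: conjugatable_field vec) \<bullet>c b)"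
  by (simp add: conjugate_sprod_vec[of _ n] comm_scalar_prod[of _ n])

lemma eq_if_cscalar_prod_diff_eq:
  fixes y z :: "'a :: conjugatable_ordered_field vec"
  assumes y: "y \<in> carrier_vec n" and z: "z \<in> carrier_vec n" and eq: "y \<bullet>c (y - z) = z \<bullet>c (y - z)"
  shows "y = z"
proof (rule eq_vecI)
  have "(y - z) \<bullet>c (y - z) = 0" using y z eq by (simp add: cscalar_prod_diff_left[of _ n])
  then have "y - z = 0\<^sub>v n" using y z conjugate_square_eq_0_vec[of "y - z" n] by simp
  fix i assume "i < dim_vec z"
  then have "(y - z) $ i = 0" using \<open>y - z = 0\<^sub>v n\<close> z by simp
  then show "y $ i = z $ i" using \<open>i < dim_vec z\<close> y z by simp
qed (use y z in simp)

lemma mat_adjoint_dim [simp]: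
  "dim_row (mat_adjoint A) = dim_col A" "dim_col (mat_adjoint A) = dim_row A"
  unfolding mat_adjoint_def mat_of_rows_def by auto

lemma mat_adjoint_carrier [simp]: "A \<in> carrier_mat n m \<Longrightarrow> mat_adjoint A \<in> carrier_mat m n"
  by auto

lemma mat_adjoint_index [simp]:
  "i < dim_col A \<Longrightarrow> j < dim_row A \<Longrightarrow> mat_adjoint A $$ (i, j) = conjugate (A $$ (j, i))"
  unfolding mat_adjoint_def mat_of_rows_def by simp

lemma cscalar_prod_sum: "v \<bullet>c w = (\<Sum>i = 0..<dim_vec w. v $ i * conjugate (w $ i))"
  unfolding scalar_prod_def conjugate_vec_def by simp

lemma cscalar_prod_mat_adjoint:
  fixes A :: "'a :: conjugatable_field mat"
  assumes A: "A \<in> carrier_mat n m" and v: "v \<in> carrier_vec m" and w: "w \<in> carrier_vec n"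
  shows "(A *\<^sub>v v) \<bullet>c w = v \<bullet>c (mat_adjoint A *\<^sub>v w)"
proof -
  have "(A *\<^sub>v v) \<bullet>c w = (\<Sum>i = 0..<n. (\<Sum>j = 0..<m. A $$ (i, j) * v $ j) * conjugate (w $ i))"
    unfolding cscalar_prod_sum using A v w by (intro sum.cong) (auto simp: scalar_prod_def)
  also have "\<dots> = (\<Sum>i = 0..<n. \<Sum>j = 0..<m. v $ j * (A $$ (i, j) * conjugate (w $ i)))"
    unfolding sum_distrib_right by (intro sum.cong refl) (simp add: ac_simps)
  also have "\<dots> = (\<Sum>j = 0..<m. \<Sum>i = 0..<n. v $ j * (A $$ (i, j) * conjugate (w $ i)))"
    by (rule sum.swap)
  also have "\<dots> = (\<Sum>j = 0..<m. v $ j * conjugate (\<Sum>i = 0..<n. conjugate (A $$ (i, j)) * w $ i))"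
    by (simp add: sum_conjugate conjugate_dist_mul sum_distrib_left)
  also have "\<dots> = v \<bullet>c (mat_adjoint A *\<^sub>v w)"
    unfolding cscalar_prod_sum using A v w by (intro sum.cong) (auto simp: scalar_prod_def)
  finally show ?thesis .
qed

lemma mat_adjoint_mult:
  fixes A :: "'a :: conjugatable_field mat"
  assumes A: "A \<in> carrier_mat n k" and B: "B \<in> carrier_mat k m"
  shows "mat_adjoint (A * B) = mat_adjoint B * mat_adjoint A"
proof (rule eq_matI)
  fix i j assume "i < dim_row (mat_adjoint B * mat_adjoint A)" "j < dim_col (mat_adjoint B * mat_adjoint A)"
  with A B show "mat_adjoint (A * B) $$ (i, j) = (mat_adjoint B * mat_adjoint A) $$ (i, j)"
    by (simp add: scalar_prod_def sum_conjugate conjugate_dist_mul mult.commute)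
qed (use A B in auto)

lemma mult_mat_vec_zero [simp]: "A \<in> carrier_mat n m \<Longrightarrow> A *\<^sub>v 0\<^sub>v m = 0\<^sub>v n"
  by (intro eq_vecI) auto

lemma index_mat_diag_mult_vec:
  "v \<in> carrier_vec n \<Longrightarrow> i < n \<Longrightarrow> (mat_diag n f *\<^sub>v v) $ i = f i * v $ i"
  by (simp add: mat_diag_def scalar_prod_def if_distrib if_distribR cong: if_cong)

definition hermitian_involution :: "nat \<Rightarrow> 'a :: conjugatable_field mat \<Rightarrow> bool" where
  "hermitian_involution n T \<longleftrightarrow> T \<in> carrier_mat n n \<and> mat_adjoint T = T \<and> T * T = 1\<^sub>m n"

lemma hermitian_involution_mat_diag:
  assumes "\<And>i. i < n \<Longrightarrow> s i * s i = 1 \<and> conjugate (s i) = s i"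
  shows "hermitian_involution n (mat_diag n s)"
proof -
  have "mat_diag n s * mat_diag n s = 1\<^sub>m n"
    unfolding mat_diag_diag using assms by (intro eq_matI) (auto simp: mat_diag_def)
  moreover have "mat_adjoint (mat_diag n s) = mat_diag n s"
    using assms by (intro eq_matI) (auto simp: mat_diag_def)
  ultimately show ?thesis unfolding hermitian_involution_def by simp
qed

context
  fixes T :: "'a :: conjugatable_field mat" and n :: nat
  assumes T: "hermitian_involution n T"
begin

lemma hermitian_involution_carrier: "T \<in> carrier_mat n n"
  using T unfolding hermitian_involution_def by simp

lemma hermitian_involution_mult_vec_twice: "v \<in> carrier_vec n \<Longrightarrow> T *\<^sub>v (T *\<^sub>v v) = v"
  using T unfolding hermitian_involution_def
  by (auto simp: assoc_mult_mat_vec[symmetric, of T n n T n v])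

lemma hermitian_involution_cscalar_prod_swap:
  "a \<in> carrier_vec n \<Longrightarrow> b \<in> carrier_vec n \<Longrightarrow> (T *\<^sub>v a) \<bullet>c b = a \<bullet>c (T *\<^sub>v b)"
  using T cscalar_prod_mat_adjoint[of T n n a b] unfolding hermitian_involution_def by simp

lemma hermitian_involution_cscalar_prod:
  "a \<in> carrier_vec n \<Longrightarrow> b \<in> carrier_vec n \<Longrightarrow> (T *\<^sub>v a) \<bullet>c (T *\<^sub>v b) = a \<bullet>c b"
  using hermitian_involution_cscalar_prod_swap hermitian_involution_mult_vec_twice
    hermitian_involution_carrier by simp

end

lemma mat_adjoint_hermitian_sandwich:
  assumes D: "D \<in> carrier_mat n' n" and T: "hermitian_involution n' T" and S: "hermitian_involution n S"
  shows "mat_adjoint (T * D * S) = S * mat_adjoint D * T"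
proof -
  have Tc: "T \<in> carrier_mat n' n'" and Sc: "S \<in> carrier_mat n n"
    using T S by (simp_all add: hermitian_involution_carrier)
  have "mat_adjoint (T * D * S) = mat_adjoint S * (mat_adjoint D * mat_adjoint T)"
    using mat_adjoint_mult[OF mult_carrier_mat[OF Tc D] Sc] mat_adjoint_mult[OF Tc D] by simp
  also have "\<dots> = S * mat_adjoint D * T"
    using T S D Sc Tc unfolding hermitian_involution_def
    by (simp add: assoc_mult_mat[of S n n _ n' T n', symmetric])
  finally show ?thesis .
qed

lemma mult_adjoint_hermitian_sandwich:
  assumes B: "B \<in> carrier_mat n m" and T: "hermitian_involution n T" and S: "hermitian_involution m S"
  shows "(T * B * S) * mat_adjoint (T * B * S) = T * (B * mat_adjoint B) * T"
proof -
  have Tc: "T \<in> carrier_mat n n" and Sc: "S \<in> carrier_mat m m" and Bh: "mat_adjoint B \<in> carrier_mat m n"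
    using T S B by (simp_all add: hermitian_involution_carrier)
  have "(T * B * S) * (S * mat_adjoint B * T) = (T * B) * (S * (S * mat_adjoint B * T))"
    using B Bh Tc Sc by (intro assoc_mult_mat[of "T * B" n m S m]) auto
  also have "S * (S * mat_adjoint B * T) = S * S * mat_adjoint B * T"
    by (simp only: assoc_mult_mat[OF Sc mult_carrier_mat[OF Sc Bh] Tc, symmetric]
        assoc_mult_mat[OF Sc Sc Bh, symmetric])
  also have "\<dots> = mat_adjoint B * T"
    using S Bh unfolding hermitian_involution_def by (simp add: left_mult_one_mat[OF Bh])
  also have "(T * B) * (mat_adjoint B * T) = T * (B * mat_adjoint B) * T"
    by (simp only: assoc_mult_mat[OF mult_carrier_mat[OF Tc B] Bh Tc, symmetric] assoc_mult_mat[OF Tc B Bh])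
  finally show ?thesis unfolding mat_adjoint_hermitian_sandwich[OF B T S] .
qed

section \<open>Orthogonal projection onto a subspace\<close>

definition vec_subspace :: "nat \<Rightarrow> 'a :: field vec set \<Rightarrow> bool" where
  "vec_subspace n W \<longleftrightarrow> W \<subseteq> carrier_vec n \<and> 0\<^sub>v n \<in> W \<and>
     (\<forall>a\<in>W. \<forall>b\<in>W. a + b \<in> W) \<and> (\<forall>c. \<forall>a\<in>W. c \<cdot>\<^sub>v a \<in> W)"

lemma vec_subspace_diff:
  assumes "vec_subspace n W" "a \<in> W" "b \<in> W"
  shows "a - b \<in> W"
proof -
  have "a - b = a + (-1) \<cdot>\<^sub>v b"
    using assms unfolding vec_subspace_def by (intro eq_vecI) auto
  then show ?thesis using assms unfolding vec_subspace_def by simp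
qed

lemma vec_subspace_preimage:
  assumes W: "vec_subspace n W" and T: "T \<in> carrier_mat n n"
  shows "vec_subspace n {e \<in> carrier_vec n. T *\<^sub>v e \<in> W}"
  using W T unfolding vec_subspace_def
  by (auto simp: mult_add_distrib_mat_vec[of T n n] mult_mat_vec[of T n n])

lemma orth_proj_exists_extend:
  fixes W :: "'a :: conjugatable_ordered_field vec set"
  assumes W: "vec_subspace n W" and W'W: "W' \<subseteq> W"
    and proj': "\<exists>p\<in>W'. \<forall>e\<in>W'. p \<bullet>c e = v \<bullet>c e"
    and u: "u \<in> W" "u \<noteq> 0\<^sub>v n" "\<And>e. e \<in> W' \<Longrightarrow> u \<bullet>c e = 0"
    and split: "\<And>e. e \<in> W \<Longrightarrow> \<exists>c. e - c \<cdot>\<^sub>v u \<in> W'"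
    and v: "v \<in> carrier_vec n"
  shows "\<exists>y\<in>W. \<forall>e\<in>W. y \<bullet>c e = v \<bullet>c e"
proof -
  have Wc: "W \<subseteq> carrier_vec n" using W unfolding vec_subspace_def by simp
  obtain p where p: "p \<in> W'" "\<And>e. e \<in> W' \<Longrightarrow> p \<bullet>c e = v \<bullet>c e" using proj' by blast
  have pc: "p \<in> carrier_vec n" and uc: "u \<in> carrier_vec n" using p u W'W Wc by auto
  have uu: "u \<bullet>c u \<noteq> 0" using u uc by simp
  define y where "y = p + ((v \<bullet>c u) / (u \<bullet>c u)) \<cdot>\<^sub>v u"
  have y: "y \<in> W" using W p u W'W unfolding y_def vec_subspace_def by blast
  have yc: "y \<in> carrier_vec n" using y Wc by auto
  have y_W': "y \<bullet>c e = v \<bullet>c e" if e: "e \<in> W'" for e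
    using e W'W Wc pc uc p(2) u(3) by (auto simp: y_def cscalar_prod_add_left[of _ n])
  have "p \<bullet>c u = 0"
    using cscalar_prod_swap[OF uc pc] u(3)[OF p(1)] by simp
  then have y_u: "y \<bullet>c u = v \<bullet>c u"
    using pc uc uu by (simp add: y_def cscalar_prod_add_left[of _ n])
  show ?thesis
  proof (intro bexI[OF _ y] ballI)
    fix e assume e: "e \<in> W"
    then obtain c where e': "e - c \<cdot>\<^sub>v u \<in> W'" using split by blast
    have ec: "e \<in> carrier_vec n" using e Wc by auto
    have e_split: "w \<bullet>c e = w \<bullet>c (e - c \<cdot>\<^sub>v u) + conjugate c * (w \<bullet>c u)"
      if w: "w \<in> carrier_vec n" for w
    proof -
      have "e = (e - c \<cdot>\<^sub>v u) + c \<cdot>\<^sub>v u" using ec uc by (intro eq_vecI) auto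
      then show ?thesis
        using w ec uc by (metis cscalar_prod_add_right cscalar_prod_smult_right minus_carrier_vec
            smult_carrier_vec)
    qed
    have "y \<bullet>c e = y \<bullet>c (e - c \<cdot>\<^sub>v u) + conjugate c * (y \<bullet>c u)" by (rule e_split[OF yc])
    also have "\<dots> = v \<bullet>c (e - c \<cdot>\<^sub>v u) + conjugate c * (v \<bullet>c u)"
      using y_W'[OF e'] y_u by simp
    also have "\<dots> = v \<bullet>c e" by (rule e_split[OF v, symmetric])
    finally show "y \<bullet>c e = v \<bullet>c e" .
  qed
qed

lemma orth_proj_exists_coordinate_step:
  fixes W :: "'a :: conjugatable_ordered_field vec set"
  assumes W: "vec_subspace n W" and k: "k < n" and w: "w \<in> W" "w $ k \<noteq> 0"
    and proj': "\<And>v. v \<in> carrier_vec n \<Longrightarrow>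
      \<exists>p\<in>{w \<in> W. w $ k = 0}. \<forall>e\<in>{w \<in> W. w $ k = 0}. p \<bullet>c e = v \<bullet>c e"
    and v: "v \<in> carrier_vec n"
  shows "\<exists>y\<in>W. \<forall>e\<in>W. y \<bullet>c e = v \<bullet>c e"
proof -
  define W' where "W' = {w \<in> W. w $ k = 0}"
  have Wc: "W \<subseteq> carrier_vec n" using W unfolding vec_subspace_def by simp
  have wc: "w \<in> carrier_vec n" using w Wc by auto
  obtain p where p: "p \<in> W'" "\<forall>e\<in>W'. p \<bullet>c e = w \<bullet>c e" using proj'[OF wc] unfolding W'_def by blast
  have pc: "p \<in> carrier_vec n" using p Wc unfolding W'_def by auto
  define u where "u = w - p"
  have u: "u \<in> W" unfolding u_def using vec_subspace_diff[OF W w(1)] p unfolding W'_def by auto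
  have uc: "u \<in> carrier_vec n" using u Wc by auto
  have uk: "u $ k \<noteq> 0" using w p k wc pc unfolding u_def W'_def by auto
  have u_orth: "u \<bullet>c e = 0" if "e \<in> W'" for e
    using that p wc pc Wc unfolding u_def W'_def by (auto simp: cscalar_prod_diff_left[of _ n])
  have split: "\<exists>c. e - c \<cdot>\<^sub>v u \<in> W'" if e: "e \<in> W" for e
  proof (intro exI)
    have "e - (e $ k / u $ k) \<cdot>\<^sub>v u \<in> W"
      using vec_subspace_diff[OF W e] W u unfolding vec_subspace_def by blast
    moreover have "(e - (e $ k / u $ k) \<cdot>\<^sub>v u) $ k = 0" using e Wc uc uk k by auto
    ultimately show "e - (e $ k / u $ k) \<cdot>\<^sub>v u \<in> W'" unfolding W'_def by simp
  qed
  show ?thesis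
    by (rule orth_proj_exists_extend[OF W _ proj'[OF v, folded W'_def] u _ u_orth split v])
      (use uk k uc in \<open>auto simp: W'_def\<close>)
qed

text \<open>Induction on the number of coordinates that vectors of \<open>W\<close> may use: the vectors of \<open>W\<close>
  whose last such coordinate vanishes form a subspace of codimension at most one.\<close>

lemma orth_proj_exists_supported:
  fixes W :: "'a :: conjugatable_ordered_field vec set"
  assumes "vec_subspace n W" "\<forall>w\<in>W. \<forall>i. k \<le> i \<longrightarrow> i < n \<longrightarrow> w $ i = 0"
    and "v \<in> carrier_vec n"
  shows "\<exists>y\<in>W. \<forall>e\<in>W. y \<bullet>c e = v \<bullet>c e"
  using assms
proof (induction k arbitrary: W v)
  case 0
  have "w = 0\<^sub>v n" if "w \<in> W" for w
    using that 0 unfolding vec_subspace_def by (intro eq_vecI) auto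
  then have "W = {0\<^sub>v n}" using 0(1) unfolding vec_subspace_def by auto
  with 0 show ?case by auto
next
  case (Suc k)
  show ?case
  proof (cases "n \<le> k \<or> (\<forall>w\<in>W. w $ k = 0)")
    case True
    have "\<forall>w\<in>W. \<forall>i. k \<le> i \<longrightarrow> i < n \<longrightarrow> w $ i = 0"
    proof (intro ballI allI impI)
      fix w i assume "w \<in> W" "k \<le> i" "i < n"
      then show "w $ i = 0" using True Suc.prems(2) by (cases "i = k") auto
    qed
    then show ?thesis using Suc.IH Suc.prems by blast
  next
    case False
    then obtain w where w: "w \<in> W" "w $ k \<noteq> 0" and k: "k < n" by auto
    define W' where "W' = {w \<in> W. w $ k = 0}"
    have W': "vec_subspace n W'"
      using Suc.prems(1) k unfolding W'_def vec_subspace_def by (auto simp: subset_iff)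
    have W'_supp: "\<forall>w\<in>W'. \<forall>i. k \<le> i \<longrightarrow> i < n \<longrightarrow> w $ i = 0"
    proof (intro ballI allI impI)
      fix w i assume "w \<in> W'" "k \<le> i" "i < n"
      then show "w $ i = 0" using Suc.prems(2) unfolding W'_def by (cases "i = k") auto
    qed
    show ?thesis
      by (rule orth_proj_exists_coordinate_step[OF Suc.prems(1) k w
            Suc.IH[OF W' W'_supp, unfolded W'_def] Suc.prems(3)])
  qed
qed

definition orth_proj :: "'a :: conjugatable_field vec set \<Rightarrow> 'a vec \<Rightarrow> 'a vec" where
  "orth_proj W v = (THE y. y \<in> W \<and> (\<forall>e\<in>W. y \<bullet>c e = v \<bullet>c e))"

context
  fixes W :: "'a :: conjugatable_ordered_field vec set" and n :: nat
  assumes W: "vec_subspace n W"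
begin

lemma orth_proj_unique_existence:
  assumes v: "v \<in> carrier_vec n"
  shows "\<exists>!y. y \<in> W \<and> (\<forall>e\<in>W. y \<bullet>c e = v \<bullet>c e)"
proof (rule ex_ex1I)
  show "\<exists>y. y \<in> W \<and> (\<forall>e\<in>W. y \<bullet>c e = v \<bullet>c e)"
    using orth_proj_exists_supported[OF W _ v, of n] by auto
next
  fix y z assume y: "y \<in> W \<and> (\<forall>e\<in>W. y \<bullet>c e = v \<bullet>c e)" and z: "z \<in> W \<and> (\<forall>e\<in>W. z \<bullet>c e = v \<bullet>c e)"
  have "y - z \<in> W" using vec_subspace_diff[OF W] y z by blast
  moreover have "y \<in> carrier_vec n" "z \<in> carrier_vec n" using y z W unfolding vec_subspace_def by auto
  ultimately show "y = z" using y z by (intro eq_if_cscalar_prod_diff_eq) auto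
qed

lemma orth_proj_in: "v \<in> carrier_vec n \<Longrightarrow> orth_proj W v \<in> W"
  and orth_proj_cscalar_prod: "v \<in> carrier_vec n \<Longrightarrow> e \<in> W \<Longrightarrow> orth_proj W v \<bullet>c e = v \<bullet>c e"
  using theI'[OF orth_proj_unique_existence] unfolding orth_proj_def by auto

lemma orth_proj_carrier: "v \<in> carrier_vec n \<Longrightarrow> orth_proj W v \<in> carrier_vec n"
  using orth_proj_in W unfolding vec_subspace_def by auto

lemma orth_proj_eqI:
  "v \<in> carrier_vec n \<Longrightarrow> y \<in> W \<Longrightarrow> (\<And>e. e \<in> W \<Longrightarrow> y \<bullet>c e = v \<bullet>c e) \<Longrightarrow> orth_proj W v = y"
  using the1_equality[OF orth_proj_unique_existence] unfolding orth_proj_def by blast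

lemma orth_proj_smult:
  assumes v: "v \<in> carrier_vec n"
  shows "orth_proj W (c \<cdot>\<^sub>v v) = c \<cdot>\<^sub>v orth_proj W v"
proof (rule orth_proj_eqI)
  show "c \<cdot>\<^sub>v orth_proj W v \<in> W" using W orth_proj_in[OF v] unfolding vec_subspace_def by blast
  fix e assume "e \<in> W"
  then have "e \<in> carrier_vec n" using W unfolding vec_subspace_def by blast
  with \<open>e \<in> W\<close> show "(c \<cdot>\<^sub>v orth_proj W v) \<bullet>c e = (c \<cdot>\<^sub>v v) \<bullet>c e"
    using v orth_proj_carrier[OF v] orth_proj_cscalar_prod[OF v] by simp
qed (use v in simp)

end

lemma orth_proj_hermitian_involution:
  fixes W :: "'a :: conjugatable_ordered_field vec set"
  assumes T: "hermitian_involution n T" and W: "vec_subspace n W" and v: "v \<in> carrier_vec n"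
  shows "orth_proj {e \<in> carrier_vec n. T *\<^sub>v e \<in> W} v = T *\<^sub>v orth_proj W (T *\<^sub>v v)"
proof (rule orth_proj_eqI[OF vec_subspace_preimage[OF W hermitian_involution_carrier[OF T]] v])
  have Tc: "T \<in> carrier_mat n n" by (rule hermitian_involution_carrier[OF T])
  have Tv: "T *\<^sub>v v \<in> carrier_vec n" using Tc v by simp
  let ?p = "orth_proj W (T *\<^sub>v v)"
  have pc: "?p \<in> carrier_vec n" by (rule orth_proj_carrier[OF W Tv])
  show "T *\<^sub>v ?p \<in> {e \<in> carrier_vec n. T *\<^sub>v e \<in> W}"
    using Tc pc orth_proj_in[OF W Tv] hermitian_involution_mult_vec_twice[OF T pc] by simp
  fix e assume "e \<in> {e \<in> carrier_vec n. T *\<^sub>v e \<in> W}"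
  then have ec: "e \<in> carrier_vec n" and Te: "T *\<^sub>v e \<in> W" by auto
  have "(T *\<^sub>v ?p) \<bullet>c e = ?p \<bullet>c (T *\<^sub>v e)"
    by (rule hermitian_involution_cscalar_prod_swap[OF T pc ec])
  also have "\<dots> = (T *\<^sub>v v) \<bullet>c (T *\<^sub>v e)" by (rule orth_proj_cscalar_prod[OF W Tv Te])
  also have "\<dots> = v \<bullet>c e" by (rule hermitian_involution_cscalar_prod[OF T v ec])
  finally show "(T *\<^sub>v ?p) \<bullet>c e = v \<bullet>c e" .
qed

section \<open>The persistent up-Laplacian of a coboundary matrix\<close>

text \<open>The constructions of \<open>pers_laplacian\<close>, with the coboundary \<open>d\<^sub>q\<^sup>t\<^sup>+\<^sup>p\<close> and the inclusion
  \<open>C\<^sup>q(X\<^sub>t) \<rightarrow> C\<^sup>q(X\<^sub>t\<^sub>+\<^sub>p)\<close> abstracted to arbitrary matrices \<open>D\<close> and \<open>J\<close>.\<close>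

definition pers_space_mat :: "'a :: conjugatable_field mat \<Rightarrow> 'a mat \<Rightarrow> nat \<Rightarrow> nat \<Rightarrow> 'a vec set" where
  "pers_space_mat D J n m = {e \<in> carrier_vec n. \<exists>x \<in> carrier_vec m. mat_adjoint D *\<^sub>v e = J *\<^sub>v x}"

definition pers_down_mat :: "'a :: conjugatable_field mat \<Rightarrow> 'a mat \<Rightarrow> nat \<Rightarrow> 'a vec \<Rightarrow> 'a vec" where
  "pers_down_mat D J m e = (THE x. x \<in> carrier_vec m \<and> mat_adjoint D *\<^sub>v e = J *\<^sub>v x)"

definition eth_mat :: "'a :: conjugatable_field mat \<Rightarrow> 'a mat \<Rightarrow> nat \<Rightarrow> nat \<Rightarrow> 'a vec \<Rightarrow> 'a vec" where
  "eth_mat D J n m x = (THE y. y \<in> pers_space_mat D J n m \<and>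
     (\<forall>e \<in> pers_space_mat D J n m. y \<bullet>c e = x \<bullet>c pers_down_mat D J m e))"

definition eth_adj_mat :: "'a :: conjugatable_field mat \<Rightarrow> 'a mat \<Rightarrow> nat \<Rightarrow> nat \<Rightarrow> 'a vec \<Rightarrow> 'a vec" where
  "eth_adj_mat D J n m e =
     (THE z. z \<in> carrier_vec m \<and> (\<forall>x \<in> carrier_vec m. z \<bullet>c x = e \<bullet>c eth_mat D J n m x))"

definition up_laplacian_mat :: "'a :: conjugatable_field mat \<Rightarrow> 'a mat \<Rightarrow> nat \<Rightarrow> nat \<Rightarrow> 'a mat" where
  "up_laplacian_mat D J n m =
     mat m m (\<lambda>(i, j). eth_adj_mat D J n m (eth_mat D J n m (unit_vec m j)) $ i)"

lemma dim_up_laplacian_mat [simp]: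
  "dim_row (up_laplacian_mat D J n m) = m" "dim_col (up_laplacian_mat D J n m) = m"
  by (simp_all add: up_laplacian_mat_def)

lemma pers_laplacian_eq_up_laplacian_mat:
  "pers_laplacian ori sdim res K L q =
     up_laplacian_mat (coboundary ori sdim res L q) (inclusion sdim K L q)
       (cdim sdim L (Suc q)) (cdim sdim K q) + down_laplacian ori sdim res K q"
  unfolding pers_laplacian_def up_laplacian_mat_def eth_adj_mat_def eth_mat_def pers_down_mat_def
    pers_space_mat_def eth_adj_def eth_def pers_down_def pers_space_def ..

definition up_map :: "'a :: conjugatable_field mat \<Rightarrow> 'a mat \<Rightarrow> nat \<Rightarrow> nat \<Rightarrow> 'a vec \<Rightarrow> 'a vec" where
  "up_map D J n m x =
     mat_adjoint J *\<^sub>v (mat_adjoint D *\<^sub>v orth_proj (pers_space_mat D J n m) (D *\<^sub>v (J *\<^sub>v x)))"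

locale isometric_inclusion =
  fixes D :: "'a :: conjugatable_ordered_field mat" and J :: "'a mat" and n' n m :: nat
  assumes D: "D \<in> carrier_mat n' n" and J: "J \<in> carrier_mat n m"
    and J_isometry: "mat_adjoint J * J = 1\<^sub>m m"
begin

abbreviation W where "W \<equiv> pers_space_mat D J n' m"

lemma adjoint_carriers: "mat_adjoint D \<in> carrier_mat n n'" "mat_adjoint J \<in> carrier_mat m n"
  using D J by simp_all

lemma pers_space_carrier: "e \<in> W \<Longrightarrow> e \<in> carrier_vec n'"
  unfolding pers_space_mat_def by simp

lemma vec_subspace_pers_space: "vec_subspace n' W"
  unfolding vec_subspace_def
proof (intro conjI ballI allI)
  show "W \<subseteq> carrier_vec n'" using pers_space_carrier by blast
  show "0\<^sub>v n' \<in> W" unfolding pers_space_mat_def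
    using D J by (auto intro!: bexI[of _ "0\<^sub>v m"])
next
  fix a b assume "a \<in> W" "b \<in> W"
  then obtain x y where "x \<in> carrier_vec m" "mat_adjoint D *\<^sub>v a = J *\<^sub>v x"
    "y \<in> carrier_vec m" "mat_adjoint D *\<^sub>v b = J *\<^sub>v y" "a \<in> carrier_vec n'" "b \<in> carrier_vec n'"
    unfolding pers_space_mat_def by auto
  with D J show "a + b \<in> W" unfolding pers_space_mat_def
    by (auto simp: mult_add_distrib_mat_vec[of _ n n'] mult_add_distrib_mat_vec[of J n m]
        intro!: bexI[of _ "x + y"])
next
  fix c a assume "a \<in> W"
  then obtain x where "x \<in> carrier_vec m" "mat_adjoint D *\<^sub>v a = J *\<^sub>v x" "a \<in> carrier_vec n'"
    unfolding pers_space_mat_def by auto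
  with D J show "c \<cdot>\<^sub>v a \<in> W" unfolding pers_space_mat_def
    by (auto simp: mult_mat_vec[of _ n n'] mult_mat_vec[of J n m] intro!: bexI[of _ "c \<cdot>\<^sub>v x"])
qed

lemma adjoint_inclusion_inclusion: "x \<in> carrier_vec m \<Longrightarrow> mat_adjoint J *\<^sub>v (J *\<^sub>v x) = x"
  using J J_isometry by (simp add: assoc_mult_mat_vec[symmetric, of _ m n J m x])

lemma cscalar_prod_through_inclusion:
  assumes x: "x \<in> carrier_vec m" and e: "e \<in> carrier_vec n'"
  shows "(D *\<^sub>v (J *\<^sub>v x)) \<bullet>c e = x \<bullet>c (mat_adjoint J *\<^sub>v (mat_adjoint D *\<^sub>v e))"
proof -
  have "(D *\<^sub>v (J *\<^sub>v x)) \<bullet>c e = (J *\<^sub>v x) \<bullet>c (mat_adjoint D *\<^sub>v e)"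
    by (rule cscalar_prod_mat_adjoint[OF D _ e]) (use J x in simp)
  also have "\<dots> = x \<bullet>c (mat_adjoint J *\<^sub>v (mat_adjoint D *\<^sub>v e))"
    by (rule cscalar_prod_mat_adjoint[OF J x]) (use adjoint_carriers e in simp)
  finally show ?thesis .
qed

lemma pers_down_mat_eq:
  assumes e: "e \<in> W"
  shows "pers_down_mat D J m e = mat_adjoint J *\<^sub>v (mat_adjoint D *\<^sub>v e)"
proof -
  obtain x where x: "x \<in> carrier_vec m" "mat_adjoint D *\<^sub>v e = J *\<^sub>v x"
    using e unfolding pers_space_mat_def by auto
  have "pers_down_mat D J m e = x"
    unfolding pers_down_mat_def
  proof (rule the_equality)
    fix x' assume "x' \<in> carrier_vec m \<and> mat_adjoint D *\<^sub>v e = J *\<^sub>v x'"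
    then show "x' = x" using x by (metis adjoint_inclusion_inclusion)
  qed (use x in simp)
  then show ?thesis using x by (simp add: adjoint_inclusion_inclusion)
qed

lemma eth_mat_eq:
  assumes x: "x \<in> carrier_vec m"
  shows "eth_mat D J n' m x = orth_proj W (D *\<^sub>v (J *\<^sub>v x))"
proof -
  have "x \<bullet>c pers_down_mat D J m e = (D *\<^sub>v (J *\<^sub>v x)) \<bullet>c e" if e: "e \<in> W" for e
    by (simp add: pers_down_mat_eq[OF e] cscalar_prod_through_inclusion[OF x pers_space_carrier[OF e]])
  then show ?thesis unfolding eth_mat_def orth_proj_def by (metis (no_types, lifting))
qed

lemma eth_adj_mat_eq:
  assumes e: "e \<in> W"
  shows "eth_adj_mat D J n' m e = mat_adjoint J *\<^sub>v (mat_adjoint D *\<^sub>v e)"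
  unfolding eth_adj_mat_def
proof (rule the_equality)
  let ?z = "mat_adjoint J *\<^sub>v (mat_adjoint D *\<^sub>v e)"
  have ec: "e \<in> carrier_vec n'" by (rule pers_space_carrier[OF e])
  have zc: "?z \<in> carrier_vec m" using adjoint_carriers ec by simp
  have z: "?z \<bullet>c x = e \<bullet>c eth_mat D J n' m x" if x: "x \<in> carrier_vec m" for x
  proof -
    have DJx: "D *\<^sub>v (J *\<^sub>v x) \<in> carrier_vec n'" using D J x by simp
    have "e \<bullet>c eth_mat D J n' m x = conjugate ((D *\<^sub>v (J *\<^sub>v x)) \<bullet>c e)"
      using e ec cscalar_prod_swap[OF orth_proj_carrier[OF vec_subspace_pers_space DJx] ec]
      by (simp add: eth_mat_eq[OF x] orth_proj_cscalar_prod[OF vec_subspace_pers_space DJx])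
    also have "(D *\<^sub>v (J *\<^sub>v x)) \<bullet>c e = x \<bullet>c ?z"
      by (rule cscalar_prod_through_inclusion[OF x ec])
    finally show ?thesis using cscalar_prod_swap[OF x zc] by simp
  qed
  then show "?z \<in> carrier_vec m \<and> (\<forall>x\<in>carrier_vec m. ?z \<bullet>c x = e \<bullet>c eth_mat D J n' m x)"
    using zc by blast
  fix y assume y: "y \<in> carrier_vec m \<and> (\<forall>x\<in>carrier_vec m. y \<bullet>c x = e \<bullet>c eth_mat D J n' m x)"
  then show "y = ?z" using zc z[of "y - ?z"] by (intro eq_if_cscalar_prod_diff_eq) auto
qed

lemma up_laplacian_mat_eq: "up_laplacian_mat D J n' m = mat m m (\<lambda>(i, j). up_map D J n' m (unit_vec m j) $ i)"
  unfolding up_laplacian_mat_def up_map_def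
  using D J adjoint_carriers by (intro eq_matI) (auto simp: eth_mat_eq eth_adj_mat_eq
      orth_proj_in[OF vec_subspace_pers_space])

lemma dim_up_map [simp]: "dim_vec (up_map D J n' m x) = m"
  unfolding up_map_def using carrier_matD(2)[OF J] by simp

lemma up_map_smult:
  assumes x: "x \<in> carrier_vec m"
  shows "up_map D J n' m (c \<cdot>\<^sub>v x) = c \<cdot>\<^sub>v up_map D J n' m x"
proof -
  have DJx: "D *\<^sub>v (J *\<^sub>v x) \<in> carrier_vec n'" using D J x by simp
  have p: "orth_proj W (D *\<^sub>v (J *\<^sub>v x)) \<in> carrier_vec n'"
    by (rule orth_proj_carrier[OF vec_subspace_pers_space DJx])
  show ?thesis
    unfolding up_map_def mult_mat_vec[OF J x] mult_mat_vec[OF D mult_mat_vec_carrier[OF J x]]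
      orth_proj_smult[OF vec_subspace_pers_space DJx] mult_mat_vec[OF adjoint_carriers(1) p]
      mult_mat_vec[OF adjoint_carriers(2) mult_mat_vec_carrier[OF adjoint_carriers(1) p]] ..
qed

end

text \<open>\<open>T\<close>, \<open>S\<close> and \<open>R\<close> change the bases of \<open>C\<^sup>q\<^sup>+\<^sup>1(X\<^sub>t\<^sub>+\<^sub>p)\<close>, \<open>C\<^sup>q(X\<^sub>t\<^sub>+\<^sub>p)\<close> and \<open>C\<^sup>q(X\<^sub>t)\<close>;
  \<open>S * J = J * R\<close> says that the change on \<open>C\<^sup>q(X\<^sub>t)\<close> is the restriction of the one on
  \<open>C\<^sup>q(X\<^sub>t\<^sub>+\<^sub>p)\<close>.\<close>

locale hermitian_change_of_basis = isometric_inclusion D J n' n m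
  for D :: "'a :: conjugatable_ordered_field mat" and J n' n m +
  fixes T S R :: "'a mat"
  assumes T: "hermitian_involution n' T" and S: "hermitian_involution n S"
    and R: "hermitian_involution m R" and SJ: "S * J = J * R"
begin

lemma involution_carriers: "T \<in> carrier_mat n' n'" "S \<in> carrier_mat n n" "R \<in> carrier_mat m m"
  using T S R by (simp_all add: hermitian_involution_carrier)

lemma S_mult_inclusion: "x \<in> carrier_vec m \<Longrightarrow> S *\<^sub>v (J *\<^sub>v x) = J *\<^sub>v (R *\<^sub>v x)"
  using involution_carriers J SJ by (metis assoc_mult_mat_vec)

lemma adjoint_inclusion_mult_S:
  "w \<in> carrier_vec n \<Longrightarrow> mat_adjoint J *\<^sub>v (S *\<^sub>v w) = R *\<^sub>v (mat_adjoint J *\<^sub>v w)"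
proof -
  have "mat_adjoint J * S = R * mat_adjoint J"
    using arg_cong[OF SJ, of mat_adjoint] involution_carriers J T S R
    by (simp add: mat_adjoint_mult[of _ n n] mat_adjoint_mult[of _ n m] hermitian_involution_def)
  then show "w \<in> carrier_vec n \<Longrightarrow> ?thesis"
    using involution_carriers adjoint_carriers by (metis assoc_mult_mat_vec)
qed

lemma mult_vec_changed:
  assumes v: "v \<in> carrier_vec n"
  shows "(T * D * S) *\<^sub>v v = T *\<^sub>v (D *\<^sub>v (S *\<^sub>v v))"
proof -
  have "(T * D * S) *\<^sub>v v = (T * D) *\<^sub>v (S *\<^sub>v v)"
    by (rule assoc_mult_mat_vec[OF mult_carrier_mat[OF involution_carriers(1) D] involution_carriers(2) v])
  also have "\<dots> = T *\<^sub>v (D *\<^sub>v (S *\<^sub>v v))"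
    by (rule assoc_mult_mat_vec[OF involution_carriers(1) D mult_mat_vec_carrier[OF involution_carriers(2) v]])
  finally show ?thesis .
qed

lemma adjoint_mult_vec_changed:
  assumes e: "e \<in> carrier_vec n'"
  shows "mat_adjoint (T * D * S) *\<^sub>v e = S *\<^sub>v (mat_adjoint D *\<^sub>v (T *\<^sub>v e))"
proof -
  note carriers = involution_carriers adjoint_carriers
  have "mat_adjoint (T * D * S) *\<^sub>v e = (S * mat_adjoint D) *\<^sub>v (T *\<^sub>v e)"
    unfolding mat_adjoint_hermitian_sandwich[OF D T S]
    by (rule assoc_mult_mat_vec[OF mult_carrier_mat[OF carriers(2,4)] carriers(1) e])
  also have "\<dots> = S *\<^sub>v (mat_adjoint D *\<^sub>v (T *\<^sub>v e))"
    by (rule assoc_mult_mat_vec[OF carriers(2,4) mult_mat_vec_carrier[OF carriers(1) e]])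
  finally show ?thesis .
qed

lemma pers_space_changed:
  "pers_space_mat (T * D * S) J n' m = {e \<in> carrier_vec n'. T *\<^sub>v e \<in> W}"
proof (intro equalityI subsetI)
  fix e assume "e \<in> pers_space_mat (T * D * S) J n' m"
  then obtain x where e: "e \<in> carrier_vec n'" and x: "x \<in> carrier_vec m"
    and "S *\<^sub>v (mat_adjoint D *\<^sub>v (T *\<^sub>v e)) = J *\<^sub>v x"
    unfolding pers_space_mat_def by (auto simp: adjoint_mult_vec_changed)
  then have "mat_adjoint D *\<^sub>v (T *\<^sub>v e) = J *\<^sub>v (R *\<^sub>v x)"
    using hermitian_involution_mult_vec_twice[OF S] involution_carriers adjoint_carriers
    by (metis S_mult_inclusion mult_mat_vec_carrier)
  then show "e \<in> {e \<in> carrier_vec n'. T *\<^sub>v e \<in> W}"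
    using e x involution_carriers unfolding pers_space_mat_def by auto
next
  fix e assume "e \<in> {e \<in> carrier_vec n'. T *\<^sub>v e \<in> W}"
  then obtain x where e: "e \<in> carrier_vec n'" and x: "x \<in> carrier_vec m"
    and "mat_adjoint D *\<^sub>v (T *\<^sub>v e) = J *\<^sub>v x"
    unfolding pers_space_mat_def by auto
  then have "mat_adjoint (T * D * S) *\<^sub>v e = J *\<^sub>v (R *\<^sub>v x)"
    by (simp add: adjoint_mult_vec_changed S_mult_inclusion)
  then show "e \<in> pers_space_mat (T * D * S) J n' m"
    using e x involution_carriers unfolding pers_space_mat_def by auto
qed

lemma up_map_changed:
  assumes x: "x \<in> carrier_vec m"
  shows "up_map (T * D * S) J n' m x = R *\<^sub>v up_map D J n' m (R *\<^sub>v x)"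
proof -
  let ?y = "D *\<^sub>v (J *\<^sub>v (R *\<^sub>v x))"
  have y: "?y \<in> carrier_vec n'" using involution_carriers x D J by auto
  have p: "orth_proj W ?y \<in> carrier_vec n'"
    by (rule orth_proj_carrier[OF vec_subspace_pers_space y])
  have "(T * D * S) *\<^sub>v (J *\<^sub>v x) = T *\<^sub>v ?y"
    using J x by (simp add: mult_vec_changed S_mult_inclusion)
  moreover have "orth_proj (pers_space_mat (T * D * S) J n' m) (T *\<^sub>v ?y) = T *\<^sub>v orth_proj W ?y"
    unfolding pers_space_changed
    using orth_proj_hermitian_involution[OF T vec_subspace_pers_space] involution_carriers y
    by (simp add: hermitian_involution_mult_vec_twice[OF T y])
  moreover have "mat_adjoint (T * D * S) *\<^sub>v (T *\<^sub>v orth_proj W ?y) = S *\<^sub>v (mat_adjoint D *\<^sub>v orth_proj W ?y)"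
    using adjoint_mult_vec_changed[of "T *\<^sub>v orth_proj W ?y"] involution_carriers p
    by (simp add: hermitian_involution_mult_vec_twice[OF T p])
  ultimately show ?thesis
    unfolding up_map_def using p adjoint_carriers by (simp add: adjoint_inclusion_mult_S)
qed

end

lemma up_laplacian_mat_change_of_basis:
  fixes D :: "'a :: conjugatable_ordered_field mat"
  assumes "hermitian_change_of_basis D J n' n m T S (mat_diag m r)"
  shows "up_laplacian_mat (T * D * S) J n' m = mat_diag m r * up_laplacian_mat D J n' m * mat_diag m r"
proof -
  interpret hermitian_change_of_basis D J n' n m T S "mat_diag m r" by fact
  interpret changed: isometric_inclusion "T * D * S" J n' n m
    using D J J_isometry involution_carriers by unfold_locales auto
  let ?M = "up_laplacian_mat D J n' m"
  have M: "?M \<in> carrier_mat m m" by (simp add: carrier_matI)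
  show ?thesis
  proof (rule eq_matI)
    fix i j assume "i < dim_row (mat_diag m r * ?M * mat_diag m r)"
      "j < dim_col (mat_diag m r * ?M * mat_diag m r)"
    then have i: "i < m" and j: "j < m" using M by (auto simp: mat_diag_def)
    have "mat_diag m r *\<^sub>v unit_vec m j = r j \<cdot>\<^sub>v unit_vec m j"
      using j by (intro eq_vecI) (auto simp: index_mat_diag_mult_vec mat_diag_def)
    then have "up_laplacian_mat (T * D * S) J n' m $$ (i, j) = r i * (r j * ?M $$ (i, j))"
      using i j by (simp add: changed.up_laplacian_mat_eq up_laplacian_mat_eq up_map_changed
          up_map_smult index_mat_diag_mult_vec carrier_vecI)
    also have "\<dots> = (mat_diag m r * ?M * mat_diag m r) $$ (i, j)"
      using i j M by (simp add: mat_diag_mult_left[OF M] mat_diag_mult_right[of _ m m])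
    finally show "up_laplacian_mat (T * D * S) J n' m $$ (i, j) = (mat_diag m r * ?M * mat_diag m r) $$ (i, j)" .
  qed (use M in \<open>auto simp: mat_diag_def\<close>)
qed

section \<open>Reorienting the simplices\<close>

lemma distinct_set_cell_list:
  assumes "finite X"
  shows "distinct (cell_list X q) \<and> set (cell_list X q) = cells X q"
proof -
  have "finite (cells X q)" using assms by (simp add: cells_def)
  then obtain xs where "distinct xs \<and> set xs = cells X q" using finite_distinct_list by blast
  then show ?thesis unfolding cell_list_def by (rule someI)
qed

lemma distinct_coords: "finite X \<Longrightarrow> distinct (coords sdim X q)"
  and set_coords: "finite X \<Longrightarrow> set (coords sdim X q) = {(\<sigma>, i). \<sigma> \<in> cells X q \<and> i < sdim \<sigma>}"
proof -
  have "distinct (concat (map (\<lambda>\<sigma>. map (Pair \<sigma>) [0..<sdim \<sigma>]) xs)) \<and>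
     set (concat (map (\<lambda>\<sigma>. map (Pair \<sigma>) [0..<sdim \<sigma>]) xs)) = {(\<sigma>, i). \<sigma> \<in> set xs \<and> i < sdim \<sigma>}"
    if "distinct xs" for xs
    using that by (induction xs) (auto simp: distinct_map inj_on_def)
  then show "finite X \<Longrightarrow> distinct (coords sdim X q)"
    and "finite X \<Longrightarrow> set (coords sdim X q) = {(\<sigma>, i). \<sigma> \<in> cells X q \<and> i < sdim \<sigma>}"
    using distinct_set_cell_list unfolding coords_def by auto
qed

lemma coords_nth_in:
  "finite X \<Longrightarrow> r < cdim sdim X q \<Longrightarrow> fst (coords sdim X q ! r) \<in> X"
  using nth_mem[of r "coords sdim X q"] set_coords[of X sdim q] unfolding cdim_def cells_def by auto

definition reorientation_mat ::
  "('v set \<Rightarrow> 'v list) \<Rightarrow> ('v set \<Rightarrow> 'v list) \<Rightarrow> ('v set \<Rightarrow> nat) \<Rightarrow> 'v set set \<Rightarrow> nat \<Rightarrow>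
   'a :: conjugatable_field mat" where
  "reorientation_mat or1 or2 sdim X q = mat_diag (cdim sdim X q)
     (\<lambda>i. of_int (perm_sign (or1 (fst (coords sdim X q ! i))) (or2 (fst (coords sdim X q ! i)))))"

lemma hermitian_involution_reorientation_mat:
  "hermitian_involution (cdim sdim X q) (reorientation_mat or1 or2 sdim X q)"
  unfolding reorientation_mat_def
  by (rule hermitian_involution_mat_diag) (simp flip: of_int_mult add: perm_sign_mult_self)

lemma coboundary_reorient:
  fixes res :: "'v set \<Rightarrow> 'v set \<Rightarrow> 'a :: conjugatable_field mat"
  assumes X: "finite X" "X \<subseteq> L" and or1: "orientation L or1" and or2: "orientation L or2"
  shows "coboundary or2 sdim res X q =
    reorientation_mat or1 or2 sdim X (Suc q) * coboundary or1 sdim res X q * reorientation_mat or1 or2 sdim X q"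
proof -
  define s :: "nat \<Rightarrow> nat \<Rightarrow> 'a" where
    "s p i = of_int (perm_sign (or1 (fst (coords sdim X p ! i))) (or2 (fst (coords sdim X p ! i))))" for p i
  let ?d = "coboundary or1 sdim res X q" and ?m = "cdim sdim X (Suc q)" and ?n = "cdim sdim X q"
  let ?f = "\<lambda>(r, c). s (Suc q) r * ?d $$ (r, c) * s q c"
  have d: "?d \<in> carrier_mat ?m ?n" by (simp add: coboundary_def)
  have "reorientation_mat or1 or2 sdim X (Suc q) * ?d * reorientation_mat or1 or2 sdim X q = mat ?m ?n ?f"
    unfolding reorientation_mat_def s_def[symmetric] mat_diag_mult_left[OF d]
    by (subst mat_diag_mult_right) auto
  also have "\<dots> = coboundary or2 sdim res X q"
  proof (rule eq_matI)
    fix r c assume "r < dim_row (coboundary or2 sdim res X q)" "c < dim_col (coboundary or2 sdim res X q)"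
    then have r: "r < ?m" and c: "c < ?n" by (simp_all add: coboundary_def)
    obtain \<tau> i where \<tau>: "coords sdim X (Suc q) ! r = (\<tau>, i)" by fastforce
    obtain \<sigma> j where \<sigma>: "coords sdim X q ! c = (\<sigma>, j)" by fastforce
    have "\<tau> \<in> L" "\<sigma> \<in> L"
      using coords_nth_in[OF X(1) r] coords_nth_in[OF X(1) c] \<tau> \<sigma> X(2) by auto
    then show "mat ?m ?n ?f $$ (r, c) = coboundary or2 sdim res X q $$ (r, c)"
      using r c by (simp add: coboundary_def s_def \<tau> \<sigma> incidence_reorient[OF or1 or2] algebra_simps)
  qed (simp_all add: coboundary_def)
  finally show ?thesis by simp
qed

lemma inclusion_carrier: "inclusion sdim K L q \<in> carrier_mat (cdim sdim L q) (cdim sdim K q)"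
  unfolding inclusion_def by simp

lemma inclusion_isometry:
  assumes K: "finite K" "K \<subseteq> L" and L: "finite L"
  shows "mat_adjoint (inclusion sdim K L q :: 'a :: conjugatable_field mat) * inclusion sdim K L q
    = 1\<^sub>m (cdim sdim K q)"
proof (rule eq_matI)
  let ?J = "inclusion sdim K L q :: 'a mat" and ?cL = "coords sdim L q" and ?cK = "coords sdim K q"
  fix a b assume "a < dim_row (1\<^sub>m (cdim sdim K q) :: 'a mat)" "b < dim_col (1\<^sub>m (cdim sdim K q) :: 'a mat)"
  then have a: "a < length ?cK" and b: "b < length ?cK" by (simp_all add: cdim_def)
  have "?cK ! a \<in> set ?cL" using nth_mem[OF a] set_coords[OF K(1)] set_coords[OF L] K(2)
    by (auto simp: cells_def)
  then obtain r0 where r0: "r0 < length ?cL" "?cL ! r0 = ?cK ! a" by (auto simp: in_set_conv_nth)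
  have r0_unique: "?cL ! r = ?cK ! a \<longleftrightarrow> r = r0" if "r < length ?cL" for r
    using r0 that nth_eq_iff_index_eq[OF distinct_coords[OF L]] by metis
  have "(mat_adjoint ?J * ?J) $$ (a, b) = (\<Sum>r = 0..<length ?cL. conjugate (?J $$ (r, a)) * ?J $$ (r, b))"
    using a b by (simp add: inclusion_def cdim_def scalar_prod_def)
  also have "\<dots> = (\<Sum>r = 0..<length ?cL. if r = r0 then (if ?cK ! a = ?cK ! b then 1 else 0) else 0)"
  proof (rule sum.cong)
    fix r assume "r \<in> {0..<length ?cL}"
    then have "conjugate (?J $$ (r, a)) = (if r = r0 then 1 else 0)"
      using r0_unique a by (simp add: inclusion_def cdim_def)
    moreover have "?J $$ (r0, b) = (if ?cK ! a = ?cK ! b then 1 else 0)"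
      using r0 b by (simp add: inclusion_def cdim_def)
    ultimately show "conjugate (?J $$ (r, a)) * ?J $$ (r, b) =
        (if r = r0 then (if ?cK ! a = ?cK ! b then 1 else 0) else 0)" by simp
  qed simp
  also have "\<dots> = (if ?cK ! a = ?cK ! b then 1 else 0)" using r0 by simp
  also have "\<dots> = 1\<^sub>m (cdim sdim K q) $$ (a, b)"
    using a b nth_eq_iff_index_eq[OF distinct_coords[OF K(1)]] by (simp add: cdim_def)
  finally show "(mat_adjoint ?J * ?J) $$ (a, b) = 1\<^sub>m (cdim sdim K q) $$ (a, b)" .
qed (simp_all add: inclusion_def)

lemma reorientation_mat_inclusion:
  "reorientation_mat or1 or2 sdim L q * inclusion sdim K L q =
   inclusion sdim K L q * reorientation_mat or1 or2 sdim K q"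
  unfolding reorientation_mat_def mat_diag_mult_left[OF inclusion_carrier]
    mat_diag_mult_right[OF inclusion_carrier]
  by (intro eq_matI) (auto simp: inclusion_def)

lemma down_laplacian_carrier:
  "down_laplacian ori sdim res K q \<in> carrier_mat (cdim sdim K q) (cdim sdim K q)"
proof (cases q)
  case (Suc p)
  have "coboundary ori sdim res K p \<in> carrier_mat (cdim sdim K q) (cdim sdim K p)"
    using Suc by (simp add: coboundary_def)
  then show ?thesis using Suc by (simp add: down_laplacian_def)
qed (simp add: down_laplacian_def)

lemma pers_laplacian_carrier:
  "pers_laplacian ori sdim res K L q \<in> carrier_mat (cdim sdim K q) (cdim sdim K q)"
  unfolding pers_laplacian_eq_up_laplacian_mat
  by (rule add_carrier_mat[OF down_laplacian_carrier])

lemma down_laplacian_reorient: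
  fixes res :: "'v set \<Rightarrow> 'v set \<Rightarrow> 'a :: conjugatable_field mat"
  assumes "finite K" "K \<subseteq> L" "orientation L or1" "orientation L or2"
  shows "down_laplacian or2 sdim res K q = reorientation_mat or1 or2 sdim K q *
    down_laplacian or1 sdim res K q * reorientation_mat or1 or2 sdim K q"
proof (cases q)
  case 0
  then show ?thesis by (simp add: down_laplacian_def reorientation_mat_def mat_diag_def)
next
  case (Suc p)
  have "coboundary or1 sdim res K p \<in> carrier_mat (cdim sdim K q) (cdim sdim K p)"
    using Suc by (simp add: coboundary_def)
  then show ?thesis
    using Suc coboundary_reorient[OF assms, of sdim res p]
      mult_adjoint_hermitian_sandwich[OF _ hermitian_involution_reorientation_mat
        hermitian_involution_reorientation_mat]
    by (simp add: down_laplacian_def)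
qed

lemma up_laplacian_reorient:
  fixes res :: "'v set \<Rightarrow> 'v set \<Rightarrow> 'a :: conjugatable_ordered_field mat"
  assumes K: "finite K" "K \<subseteq> L" and L: "finite L" and or1: "orientation L or1" and or2: "orientation L or2"
  shows "up_laplacian_mat (coboundary or2 sdim res L q) (inclusion sdim K L q) (cdim sdim L (Suc q))
      (cdim sdim K q) =
    reorientation_mat or1 or2 sdim K q *
    up_laplacian_mat (coboundary or1 sdim res L q) (inclusion sdim K L q) (cdim sdim L (Suc q))
      (cdim sdim K q) *
    reorientation_mat or1 or2 sdim K q"
proof -
  define r :: "nat \<Rightarrow> 'a" where
    "r i = of_int (perm_sign (or1 (fst (coords sdim K q ! i))) (or2 (fst (coords sdim K q ! i))))" for i
  have R: "reorientation_mat or1 or2 sdim K q = mat_diag (cdim sdim K q) r"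
    unfolding reorientation_mat_def r_def ..
  have "hermitian_change_of_basis (coboundary or1 sdim res L q) (inclusion sdim K L q)
      (cdim sdim L (Suc q)) (cdim sdim L q) (cdim sdim K q) (reorientation_mat or1 or2 sdim L (Suc q))
      (reorientation_mat or1 or2 sdim L q) (reorientation_mat or1 or2 sdim K q)"
    by unfold_locales (simp_all add: coboundary_def inclusion_carrier inclusion_isometry[OF K L]
        hermitian_involution_reorientation_mat reorientation_mat_inclusion)
  from up_laplacian_mat_change_of_basis[OF this[unfolded R]]
  show ?thesis unfolding coboundary_reorient[OF L order.refl or1 or2] R .
qed

lemma pers_laplacian_reorient:
  fixes res :: "'v set \<Rightarrow> 'v set \<Rightarrow> 'a :: conjugatable_ordered_field mat"
  assumes K: "finite K" "K \<subseteq> L" and L: "finite L" and or1: "orientation L or1" and or2: "orientation L or2"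
  shows "pers_laplacian or2 sdim res K L q = reorientation_mat or1 or2 sdim K q *
    pers_laplacian or1 sdim res K L q * reorientation_mat or1 or2 sdim K q"
proof -
  let ?R = "reorientation_mat or1 or2 sdim K q :: 'a mat" and ?m = "cdim sdim K q"
  let ?up = "up_laplacian_mat (coboundary or1 sdim res L q) (inclusion sdim K L q) (cdim sdim L (Suc q)) ?m"
    and ?down = "down_laplacian or1 sdim res K q"
  have R: "?R \<in> carrier_mat ?m ?m" and up: "?up \<in> carrier_mat ?m ?m"
    by (simp_all add: reorientation_mat_def carrier_matI)
  note down = down_laplacian_carrier[of or1 sdim res K q]
  have "pers_laplacian or2 sdim res K L q = ?R * ?up * ?R + ?R * ?down * ?R"
    unfolding pers_laplacian_eq_up_laplacian_mat up_laplacian_reorient[OF K L or1 or2]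
      down_laplacian_reorient[OF K or1 or2] ..
  also have "\<dots> = (?R * ?up + ?R * ?down) * ?R"
    by (rule add_mult_distrib_mat[OF mult_carrier_mat[OF R up] mult_carrier_mat[OF R down] R, symmetric])
  also have "\<dots> = ?R * (?up + ?down) * ?R" by (simp only: mult_add_distrib_mat[OF R up down])
  finally show ?thesis unfolding pers_laplacian_eq_up_laplacian_mat .
qed

theorem mainTheorem4:
  fixes K L :: "'v set set"
    and sdim :: "'v set \<Rightarrow> nat"
    and res :: "'v set \<Rightarrow> 'v set \<Rightarrow> 'a :: conjugatable_ordered_field mat"
    and or1 or2 :: "'v set \<Rightarrow> 'v list"
    and q :: nat
  assumes "simplicial_complex K" and "simplicial_complex L" and "K \<subseteq> L"
    and "cellular_sheaf L sdim res"
    and "orientation L or1" and "orientation L or2"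
  shows "spectrum_mset (pers_laplacian or1 sdim res K L q)
       = spectrum_mset (pers_laplacian or2 sdim res K L q)"
proof -
  have fin: "finite K" "finite L" using assms(1,2) unfolding simplicial_complex_def by auto
  let ?R = "reorientation_mat or1 or2 sdim K q :: 'a mat" and ?m = "cdim sdim K q"
  have R: "?R \<in> carrier_mat ?m ?m" "?R * ?R = 1\<^sub>m ?m"
    using hermitian_involution_reorientation_mat unfolding hermitian_involution_def by blast+
  have "similar_mat (pers_laplacian or2 sdim res K L q) (pers_laplacian or1 sdim res K L q)"
    using R pers_laplacian_carrier pers_laplacian_reorient[OF fin(1) assms(3) fin(2) assms(5,6)]
    by (intro similar_matI[of _ _ ?R ?R ?m]) auto
  then show ?thesis unfolding spectrum_mset_def using char_poly_similar by metis
qed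

end
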